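(* Let $F\colon\mathbb{R}^p\to\mathbb{R}$ be a linear ReLU network with skip connections. Then $\partial^cF(0)=\{0\}$ if and only if $F$ is constant.
   Context: A linear ReLU network with skip connections is $F(x)=M_L\Phi_{L-1}(M_{L-1}\Phi_{L-2}(\cdots\Phi_1(M_1x)))$ with real matrices $M_1\in\mathbb{R}^{p_1\times p}$, $M_i\in\mathbb{R}^{p_i\times p_{i-1}}$, $M_L\in\mathbb{R}^{1\times p_{L-1}}$, each $\Phi_i$ acting coordinatewise as either the identity or $\mathrm{ReLU}(t)=\max(0,t)$ on each coordinate. The Clarke subdifferential is $\partial^cF(x)=\mathrm{conv}\{\lim_k\nabla F(x_k):x_k\to x,\ x_k\in\mathrm{diff}_F\}$, $\mathrm{diff}_F$ being the set of differentiability points of $F$. *)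

theory Defs
  imports "HOL-Analysis.Analysis"
begin

definition act :: "(nat \<Rightarrow> bool) \<Rightarrow> (nat \<Rightarrow> real) \<Rightarrow> (nat \<Rightarrow> real)" where
  "act A v = (\<lambda>i. if A i then max 0 (v i) else v i)"

text \<open>Layers after the first: each entry (Phi_k, M_(k+1), p_k) applies the activation
  Phi_k to the current p_k-dimensional hidden vector and then the matrix M_(k+1)
  (only columns j < p_k are used).\<close>
fun net_eval :: "((nat \<Rightarrow> bool) \<times> (nat \<Rightarrow> nat \<Rightarrow> real) \<times> nat) list \<Rightarrow> (nat \<Rightarrow> real) \<Rightarrow> (nat \<Rightarrow> real)" where
  "net_eval [] h = h"
| "net_eval ((A, M, n) # rest) h = net_eval rest (\<lambda>i. \<Sum>j<n. M i j * act A h j)"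

text \<open>F(x) = M_L Phi_(L-1)(... Phi_1(M_1 x)); row i of M_1 is the vector M1 i,
  and the scalar output is coordinate 0 of the last layer.\<close>
definition linear_relu_net :: "(real^'n \<Rightarrow> real) \<Rightarrow> bool" where
  "linear_relu_net F \<longleftrightarrow>
     (\<exists>(M1 :: nat \<Rightarrow> real^'n) layers.
        F = (\<lambda>x. net_eval layers (\<lambda>i. M1 i \<bullet> x) 0))"

definition diff_points :: "(real^'n \<Rightarrow> real) \<Rightarrow> (real^'n) set" where
  "diff_points F = {x. F differentiable (at x)}"

definition clarke_subdiff :: "(real^'n \<Rightarrow> real) \<Rightarrow> real^'n \<Rightarrow> (real^'n) set" where
  "clarke_subdiff F x = convex hull
     {g. \<exists>X G. (\<forall>k. X k \<in> diff_points F \<and> (F has_derivative (\<lambda>h. G k \<bullet> h)) (at (X k)))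
               \<and> X \<longlonglongrightarrow> x \<and> G \<longlonglongrightarrow> g}"

end

theory Submission
  imports Defs
begin

text \<open>Such an F is positively homogeneous. Hence its gradient at a point x of differentiability
  is also its gradient at every point x/k, so it lies in the Clarke subdifferential at 0, and by
  Euler's identity F x equals that gradient applied to x. If the subdifferential at 0 is {0},
  F therefore vanishes wherever it is differentiable. These points are dense: every layer
  preserves the property that each nonempty open set contains a nonempty open set on which any
  finitely many hidden units are affine. As F is continuous, it vanishes everywhere.\<close>

definition pos_homogeneous :: "('a::real_vector \<Rightarrow> 'b::real_vector) \<Rightarrow> bool" where
  "pos_homogeneous f \<longleftrightarrow> (\<forall>t>0. \<forall>x. f (t *\<^sub>R x) = t *\<^sub>R f x)"

lemma pos_homogeneous_has_derivative_scaleR: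
  assumes hom: "pos_homogeneous f" and deriv: "(f has_derivative f') (at x)" and "c > 0"
  shows "(f has_derivative f') (at (c *\<^sub>R x))"
proof -
  have f_eq: "f y = c *\<^sub>R f (inverse c *\<^sub>R y)" for y
  proof -
    have "f (c *\<^sub>R (inverse c *\<^sub>R y)) = c *\<^sub>R f (inverse c *\<^sub>R y)"
      using hom \<open>c > 0\<close> unfolding pos_homogeneous_def by blast
    then show ?thesis
      using \<open>c > 0\<close> by simp
  qed
  have "((\<lambda>y. inverse c *\<^sub>R y) has_derivative (\<lambda>h. inverse c *\<^sub>R h)) (at (c *\<^sub>R x))"
    by (rule bounded_linear_imp_has_derivative[OF bounded_linear_scaleR_right])
  moreover have "(f has_derivative f') (at (inverse c *\<^sub>R (c *\<^sub>R x)))"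
    using deriv \<open>c > 0\<close> by simp
  ultimately have "((\<lambda>y. c *\<^sub>R f (inverse c *\<^sub>R y)) has_derivative
      (\<lambda>h. c *\<^sub>R f' (inverse c *\<^sub>R h))) (at (c *\<^sub>R x))"
    by (intro has_derivative_scaleR_right) (rule has_derivative_compose)
  moreover have "c *\<^sub>R f' (inverse c *\<^sub>R h) = f' h" for h
    using linear_cmul[OF has_derivative_linear[OF deriv]] \<open>c > 0\<close> by simp
  ultimately show ?thesis
    by (simp add: f_eq[symmetric])
qed

lemma pos_homogeneous_euler:
  assumes hom: "pos_homogeneous f" and deriv: "(f has_derivative f') (at x)"
  shows "f' x = f x"
proof -
  have ray: "((\<lambda>t::real. t *\<^sub>R x) has_derivative (\<lambda>t. t *\<^sub>R x)) (at 1)"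
    by (auto intro!: derivative_eq_intros)
  have "((\<lambda>t. f (t *\<^sub>R x)) has_derivative (\<lambda>t. f' (t *\<^sub>R x))) (at 1)"
    using has_derivative_compose[OF ray, of f f'] deriv by simp
  then have "((\<lambda>t. t *\<^sub>R f x) has_derivative (\<lambda>t. f' (t *\<^sub>R x))) (at 1)"
    by (rule has_derivative_transform_within_open[where s="{0<..}"])
      (use hom in \<open>auto simp: pos_homogeneous_def\<close>)
  moreover have "((\<lambda>t. t *\<^sub>R f x) has_derivative (\<lambda>t. t *\<^sub>R f x)) (at 1)"
    by (auto intro!: derivative_eq_intros)
  ultimately have "(\<lambda>t. f' (t *\<^sub>R x)) = (\<lambda>t. t *\<^sub>R f x)"
    by (rule has_derivative_unique)
  from fun_cong[OF this, of 1] show ?thesis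
    by simp
qed

lemma clarke_subdiff_const: "clarke_subdiff (\<lambda>x. c) x = {0}"
proof -
  let ?S = "{g. \<exists>X G. (\<forall>k. X k \<in> diff_points (\<lambda>x. c) \<and>
                 ((\<lambda>x. c) has_derivative (\<lambda>h. G k \<bullet> h)) (at (X k))) \<and> X \<longlonglongrightarrow> x \<and> G \<longlonglongrightarrow> g}"
  have "g = 0" if "g \<in> ?S" for g
  proof -
    obtain X G where deriv: "\<And>k. ((\<lambda>x. c) has_derivative (\<lambda>h. G k \<bullet> h)) (at (X k))"
      and lim: "G \<longlonglongrightarrow> g"
      using \<open>g \<in> ?S\<close> by blast
    have "(\<lambda>h. G k \<bullet> h) = (\<lambda>h. 0)" for k
      using deriv has_derivative_const has_derivative_unique by blast
    then have "G = (\<lambda>k. 0)"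
      by (metis inner_eq_zero_iff)
    with lim show ?thesis
      using LIMSEQ_unique by blast
  qed
  moreover have "0 \<in> ?S"
    by (intro CollectI exI[of _ "\<lambda>k. x"] exI[of _ "\<lambda>k. 0"])
      (auto simp: diff_points_def)
  ultimately have "?S = {0}"
    by blast
  then show ?thesis
    unfolding clarke_subdiff_def by simp
qed

lemma pos_homogeneous_gradient_in_clarke_subdiff_0:
  fixes F :: "real^'n \<Rightarrow> real"
  assumes hom: "pos_homogeneous F" and deriv: "(F has_derivative (\<lambda>h. a \<bullet> h)) (at x)"
  shows "a \<in> clarke_subdiff F 0"
proof -
  define X where "X k = inverse (real (Suc k)) *\<^sub>R x" for k
  have "(F has_derivative (\<lambda>h. a \<bullet> h)) (at (X k))" for k
    unfolding X_def using hom deriv by (rule pos_homogeneous_has_derivative_scaleR) simp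
  moreover have "X \<longlonglongrightarrow> 0"
    unfolding X_def using tendsto_scaleR[OF LIMSEQ_inverse_real_of_nat tendsto_const, of x] by simp
  ultimately show ?thesis
    unfolding clarke_subdiff_def diff_points_def differentiable_def
    by (intro hull_inc CollectI exI[of _ X] exI[of _ "\<lambda>k. a"]) auto
qed

lemma continuous_constant_if_fiber_dense:
  fixes f :: "'a::topological_space \<Rightarrow> 'b::t2_space"
  assumes "continuous_on UNIV f" and "\<And>V. open V \<Longrightarrow> V \<noteq> {} \<Longrightarrow> \<exists>x\<in>V. f x = c"
  shows "f x = c"
proof (rule ccontr)
  assume "f x \<noteq> c"
  have "open (f -` (- {c}))"
    using assms(1) continuous_on_open_vimage[of UNIV f] by (simp add: open_Compl)
  then show False
    using assms(2) \<open>f x \<noteq> c\<close> by blast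
qed

lemma pos_homogeneous_eq_0_if_clarke_subdiff_0:
  fixes F :: "real^'n \<Rightarrow> real"
  assumes hom: "pos_homogeneous F" and clarke: "clarke_subdiff F 0 = {0}"
    and "continuous_on UNIV F"
    and dense: "\<And>V. open V \<Longrightarrow> V \<noteq> {} \<Longrightarrow> \<exists>x\<in>V. \<exists>a. (F has_derivative (\<lambda>h. a \<bullet> h)) (at x)"
  shows "F x = 0"
proof (rule continuous_constant_if_fiber_dense[of F])
  show "continuous_on UNIV F"
    by fact
  have vanish: "F x = 0" if deriv: "(F has_derivative (\<lambda>h. a \<bullet> h)) (at x)" for x a
  proof -
    have "a = 0"
      using pos_homogeneous_gradient_in_clarke_subdiff_0[OF hom deriv] clarke by simp
    then show ?thesis
      using pos_homogeneous_euler[OF hom deriv] by simp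
  qed
  show "\<exists>x\<in>V. F x = 0" if "open V" "V \<noteq> {}" for V
    using dense[OF that] vanish by blast
qed

definition affine_on :: "'a::real_inner set \<Rightarrow> ('a \<Rightarrow> real) \<Rightarrow> bool" where
  "affine_on W f \<longleftrightarrow> (\<exists>c a. \<forall>y\<in>W. f y = c + a \<bullet> y)"

lemma affine_on_subset: "affine_on W f \<Longrightarrow> V \<subseteq> W \<Longrightarrow> affine_on V f"
  unfolding affine_on_def by blast

lemma affine_on_linear_combination:
  assumes "finite S" and "\<forall>j\<in>S. affine_on W (f j)"
  shows "affine_on W (\<lambda>y. \<Sum>j\<in>S. m j * f j y)"
  using assms
proof (induction S rule: finite_induct)
  case empty
  show ?case
    unfolding affine_on_def by (intro exI[of _ 0]) simp
next
  case (insert i S)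
  obtain c a where ca: "\<forall>y\<in>W. (\<Sum>j\<in>S. m j * f j y) = c + a \<bullet> y"
    using insert unfolding affine_on_def by auto
  obtain c' a' where ca': "\<forall>y\<in>W. f i y = c' + a' \<bullet> y"
    using insert unfolding affine_on_def by auto
  have "\<forall>y\<in>W. (\<Sum>j\<in>insert i S. m j * f j y) = (m i * c' + c) + (m i *\<^sub>R a' + a) \<bullet> y"
    using ca ca' insert(1,2) by (simp add: inner_add_left algebra_simps)
  then show ?case
    unfolding affine_on_def by blast
qed

lemma affine_on_has_derivative:
  assumes "affine_on W f" and "open W" and "x \<in> W"
  shows "\<exists>a. (f has_derivative (\<lambda>h. a \<bullet> h)) (at x)"
proof -
  obtain c a where ca: "\<forall>y\<in>W. f y = c + a \<bullet> y"
    using assms(1) unfolding affine_on_def by blast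
  have "((\<lambda>y. c + a \<bullet> y) has_derivative (\<lambda>h. a \<bullet> h)) (at x)"
    by (auto intro!: derivative_eq_intros)
  then have "(f has_derivative (\<lambda>h. a \<bullet> h)) (at x)"
    by (rule has_derivative_transform_within_open[OF _ assms(2,3)]) (simp add: ca)
  then show ?thesis ..
qed

lemma affine_on_relu_refine:
  assumes "affine_on W f" and "continuous_on W f" and "open W" and "W \<noteq> {}"
  obtains W' where "W' \<subseteq> W" "open W'" "W' \<noteq> {}" "affine_on W' (\<lambda>y. max 0 (f y))"
proof (cases "\<exists>y\<in>W. f y > 0")
  case True
  let ?W' = "W \<inter> f -` {0<..}"
  have "open ?W'"
    using assms(2,3) by (rule continuous_open_preimage) simp
  moreover have "affine_on ?W' (\<lambda>y. max 0 (f y))"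
    using affine_on_subset[OF assms(1)] unfolding affine_on_def by force
  ultimately show ?thesis
    using True that by blast
next
  case False
  then have "affine_on W (\<lambda>y. max 0 (f y))"
    unfolding affine_on_def by (intro exI[of _ 0]) (auto simp: max_def)
  then show ?thesis
    using assms(3,4) that by blast
qed

lemma affine_on_act_refine:
  assumes cont: "\<forall>j. continuous_on UNIV (\<lambda>x. H x j)" and "open W" and "W \<noteq> {}"
    and "\<forall>j<n. affine_on W (\<lambda>x. H x j)"
  shows "\<exists>W'\<subseteq>W. open W' \<and> W' \<noteq> {} \<and> (\<forall>j<n. affine_on W' (\<lambda>x. act A (H x) j))"
  using assms(4)
proof (induction n)
  case 0
  then show ?case
    using assms(2,3) by blast
next
  case (Suc n)
  then obtain W1 where W1: "W1 \<subseteq> W" "open W1" "W1 \<noteq> {}"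
    and aff1: "\<forall>j<n. affine_on W1 (\<lambda>x. act A (H x) j)"
    by auto
  have aff: "affine_on W1 (\<lambda>x. H x n)"
    using Suc.prems W1(1) affine_on_subset by blast
  have cont1: "continuous_on W1 (\<lambda>x. H x n)"
    using cont continuous_on_subset by blast
  then obtain W2 where W2: "W2 \<subseteq> W1" "open W2" "W2 \<noteq> {}"
    and aff2: "affine_on W2 (\<lambda>x. act A (H x) n)"
  proof (cases "A n")
    case True
    obtain W2 where "W2 \<subseteq> W1" "open W2" "W2 \<noteq> {}" "affine_on W2 (\<lambda>x. max 0 (H x n))"
      using affine_on_relu_refine[OF aff cont1 W1(2,3)] .
    then show ?thesis
      using that[of W2] True by (simp add: act_def)
  next
    case False
    then show ?thesis
      using that[of W1] W1(2,3) aff by (simp add: act_def)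
  qed
  have "\<forall>j<Suc n. affine_on W2 (\<lambda>x. act A (H x) j)"
    using aff1 aff2 W2(1) affine_on_subset less_Suc_eq by metis
  then show ?case
    using W1(1) W2 by blast
qed

text \<open>Weaker than piecewise affinity, but preserved by every layer; continuity is what allows
  splitting an affine piece at a ReLU kink.\<close>
definition continuous_dense_affine_pieces :: "('a::real_inner \<Rightarrow> nat \<Rightarrow> real) \<Rightarrow> bool" where
  "continuous_dense_affine_pieces H \<longleftrightarrow> (\<forall>j. continuous_on UNIV (\<lambda>x. H x j)) \<and>
     (\<forall>n V. open V \<longrightarrow> V \<noteq> {} \<longrightarrow>
        (\<exists>W\<subseteq>V. open W \<and> W \<noteq> {} \<and> (\<forall>j<n. affine_on W (\<lambda>x. H x j))))"

lemma continuous_dense_affine_pieces_inner: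
  "continuous_dense_affine_pieces (\<lambda>x i. M i \<bullet> x)"
proof -
  have "affine_on V (\<lambda>x. M i \<bullet> x)" for V i
    unfolding affine_on_def by (intro exI[of _ 0] exI[of _ "M i"]) simp
  then show ?thesis
    unfolding continuous_dense_affine_pieces_def by (auto intro: continuous_intros)
qed

lemma continuous_dense_affine_pieces_layer:
  assumes H: "continuous_dense_affine_pieces H"
  shows "continuous_dense_affine_pieces (\<lambda>x i. \<Sum>j<n. M i j * act A (H x) j)"
  unfolding continuous_dense_affine_pieces_def
proof (intro conjI allI impI)
  have cont: "\<forall>j. continuous_on UNIV (\<lambda>x. H x j)"
    using H unfolding continuous_dense_affine_pieces_def by blast
  have "continuous_on UNIV (\<lambda>x. act A (H x) j)" for j
    using cont by (cases "A j") (auto simp: act_def intro!: continuous_intros)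
  then show "continuous_on UNIV (\<lambda>x. \<Sum>j<n. M i j * act A (H x) j)" for i
    by (auto intro!: continuous_intros)
  fix m :: nat and V :: "'a set"
  assume "open V" "V \<noteq> {}"
  then obtain W where W: "W \<subseteq> V" "open W" "W \<noteq> {}" "\<forall>j<n. affine_on W (\<lambda>x. H x j)"
    using H unfolding continuous_dense_affine_pieces_def by blast
  then obtain W' where W': "W' \<subseteq> W" "open W'" "W' \<noteq> {}"
    "\<forall>j<n. affine_on W' (\<lambda>x. act A (H x) j)"
    using affine_on_act_refine[OF cont] by meson
  then have "\<forall>i<m. affine_on W' (\<lambda>x. \<Sum>j<n. M i j * act A (H x) j)"
    by (auto intro: affine_on_linear_combination)
  then show "\<exists>W'\<subseteq>V. open W' \<and> W' \<noteq> {} \<and>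
      (\<forall>i<m. affine_on W' (\<lambda>x. \<Sum>j<n. M i j * act A (H x) j))"
    using W(1) W' by blast
qed

lemma continuous_dense_affine_pieces_net_eval:
  "continuous_dense_affine_pieces H \<Longrightarrow> continuous_dense_affine_pieces (\<lambda>x. net_eval layers (H x))"
proof (induction layers arbitrary: H)
  case Nil
  then show ?case by simp
next
  case (Cons layer layers)
  obtain A M n where "layer = (A, M, n)"
    by (cases layer)
  then show ?case
    using Cons.IH[OF continuous_dense_affine_pieces_layer[OF Cons.prems]] by simp
qed

lemma continuous_dense_affine_pieces_has_derivative:
  assumes "continuous_dense_affine_pieces H" and "open V" and "V \<noteq> {}"
  shows "\<exists>x\<in>V. \<exists>a. ((\<lambda>x. H x j) has_derivative (\<lambda>h. a \<bullet> h)) (at x)"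
proof -
  obtain W where "W \<subseteq> V" "open W" "W \<noteq> {}" "affine_on W (\<lambda>x. H x j)"
    using assms unfolding continuous_dense_affine_pieces_def by (meson lessI)
  then show ?thesis
    using affine_on_has_derivative by (metis all_not_in_conv subsetD)
qed

lemma act_scale: "t \<ge> 0 \<Longrightarrow> act A (\<lambda>i. t * h i) = (\<lambda>i. t * act A h i)"
  unfolding act_def by (auto simp: max_mult_distrib_left)

lemma net_eval_scale:
  "t \<ge> 0 \<Longrightarrow> net_eval layers (\<lambda>i. t * h i) = (\<lambda>i. t * net_eval layers h i)"
proof (induction layers arbitrary: h)
  case Nil
  then show ?case by simp
next
  case (Cons layer layers)
  obtain A M n where "layer = (A, M, n)"
    by (cases layer)
  moreover have "(\<lambda>i. \<Sum>j<n. M i j * act A (\<lambda>i. t * h i) j) =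
      (\<lambda>i. t * (\<Sum>j<n. M i j * act A h j))"
    using Cons.prems by (simp add: act_scale sum_distrib_left mult.left_commute)
  ultimately show ?case
    using Cons by simp
qed

lemma linear_relu_net_pos_homogeneous:
  "pos_homogeneous (\<lambda>x. net_eval layers (\<lambda>i. M i \<bullet> x) j)"
  unfolding pos_homogeneous_def by (simp add: net_eval_scale)

theorem lemmaD4:
  fixes F :: "real^'n \<Rightarrow> real"
  assumes "linear_relu_net F"
  shows "clarke_subdiff F 0 = {0} \<longleftrightarrow> (\<exists>c. \<forall>x. F x = c)"
proof
  assume clarke: "clarke_subdiff F 0 = {0}"
  obtain M :: "nat \<Rightarrow> real^'n" and layers where
    F: "F = (\<lambda>x. net_eval layers (\<lambda>i. M i \<bullet> x) 0)"
    using assms unfolding linear_relu_net_def by blast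
  have pieces: "continuous_dense_affine_pieces (\<lambda>x. net_eval layers (\<lambda>i. M i \<bullet> x))"
    by (rule continuous_dense_affine_pieces_net_eval[OF continuous_dense_affine_pieces_inner])
  have "F x = 0" for x
  proof (rule pos_homogeneous_eq_0_if_clarke_subdiff_0[OF _ clarke])
    show "pos_homogeneous F"
      unfolding F by (rule linear_relu_net_pos_homogeneous)
    show "continuous_on UNIV F"
      using pieces unfolding F continuous_dense_affine_pieces_def by blast
    show "\<exists>x\<in>V. \<exists>a. (F has_derivative (\<lambda>h. a \<bullet> h)) (at x)" if "open V" "V \<noteq> {}" for V
      unfolding F by (rule continuous_dense_affine_pieces_has_derivative[OF pieces that])
  qed
  then show "\<exists>c. \<forall>x. F x = c"
    by blast
next
  assume "\<exists>c. \<forall>x. F x = c"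
  then obtain c where "F = (\<lambda>x. c)"
    by blast
  then show "clarke_subdiff F 0 = {0}"
    by (simp add: clarke_subdiff_const)
qed

end
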